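(* For every integer $p\ge1$ and every complex $z$ with $e^z\ne1$, $$\sum_{n\ge0}\mathcal{B}_{n,p}\frac{z^n}{n!}=\exp(e^z-1)\,(-1)^{p-1}p\left(e^{-z}\frac{d}{dz}\right)^{p-1}\left(\frac{1-\exp(1-e^z)}{e^z-1}\right),$$ where $\left(e^{-z}\frac{d}{dz}\right)^{p-1}$ denotes the $(p-1)$-fold iterate of the operator $g\mapsto e^{-z}g'(z)$.
   Context: For an integer $p\ge0$, the $p$-Bell numbers $\mathcal{B}_{n,p}$ are defined by $\sum_{n\ge0}\mathcal{B}_{n,p}\frac{z^n}{n!}=\sum_{n\ge0}\binom{n+p}{p}^{-1}\frac{(e^z-1)^n}{n!}$ (an entire function of $z$ whose Taylor series is the left side). *)

theory Defs
  imports "HOL-Analysis.Analysis"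
begin

definition pBell_egf :: "nat \<Rightarrow> complex \<Rightarrow> complex" where
  "pBell_egf p z = (\<Sum>k. (exp z - 1) ^ k / (of_nat ((k + p) choose p) * fact k))"

text \<open>The p-Bell number B_{n,p}: n-th Taylor coefficient at 0 times n!, i.e.
  the n-th derivative at 0 of the entire function F_p.\<close>
definition pBell :: "nat \<Rightarrow> nat \<Rightarrow> complex" where
  "pBell n p = (deriv ^^ n) (pBell_egf p) 0"

definition expD :: "(complex \<Rightarrow> complex) \<Rightarrow> complex \<Rightarrow> complex" where
  "expD g = (\<lambda>z. exp (- z) * deriv g z)"

end

theory Submission
  imports Defs "HOL-Complex_Analysis.Cauchy_Integral_Formula"
begin

(* Put u = e^z - 1. Then F_p(z) = G_p(u) with G_p(u) = sum_k u^k / (binom(k+p,p) k!), and since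
   du/dz = e^z the operator e^{-z} d/dz acts on functions of u as d/du. Let
   H_m(u) = (-1)^m int_0^1 t^m e^{-ut} dt, so that H_0(u) = (1 - e^{-u})/u and H_m' = H_{m+1};
   hence the (p-1)-fold iterate in the theorem is H_{p-1}(e^z - 1). Finally
   e^u (-1)^m (m+1) H_m(u) = G_{m+1}(u): comparing coefficients of the Cauchy product reduces
   this to the beta integral sum_k (-1)^k binom(n,k)/(m+k+1) = m! n!/(m+n+1)!.
   The Taylor series of the entire function F_p converges at every z. *)

lemma alternating_binomial_sum_Suc:
  fixes f :: "nat \<Rightarrow> 'a::comm_ring_1"
  shows "(\<Sum>k\<le>Suc n. (-1)^k * of_nat (Suc n choose k) * f k)
       = (\<Sum>k\<le>n. (-1)^k * of_nat (n choose k) * (f k - f (Suc k)))"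
proof -
  define g where "g k = (-1)^k * of_nat (n choose k) * f k" for k
  have "(\<Sum>k\<le>n. g k) = (\<Sum>k\<le>Suc n. g k)"
    by (simp add: g_def binomial_eq_0)
  also have "\<dots> = f 0 + (\<Sum>k\<le>n. g (Suc k))"
    by (subst sum.atMost_Suc_shift) (simp add: g_def)
  finally have shift: "f 0 + (\<Sum>k\<le>n. g (Suc k)) = (\<Sum>k\<le>n. g k)" ..
  have "(\<Sum>k\<le>Suc n. (-1)^k * of_nat (Suc n choose k) * f k)
      = f 0 + (\<Sum>k\<le>n. g (Suc k))
          - (\<Sum>k\<le>n. (-1)^k * of_nat (n choose k) * f (Suc k))"
    by (subst sum.atMost_Suc_shift)
       (simp add: g_def ring_distribs sum.distrib sum_subtractf sum_negf)
  also have "\<dots> = (\<Sum>k\<le>n. (-1)^k * of_nat (n choose k) * (f k - f (Suc k)))"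
    by (simp only: shift) (simp add: g_def sum_subtractf right_diff_distrib)
  finally show ?thesis .
qed

lemma alternating_binomial_sum_beta:
  "(\<Sum>k\<le>n. (-1)^k * of_nat (n choose k) / of_nat (m + k + 1) :: 'a::field_char_0)
     = fact m * fact n / fact (m + n + 1)"
proof (induction n arbitrary: m)
  case 0
  show ?case by (simp add: fact_Suc del: of_nat_Suc)
next
  case (Suc n)
  have "(\<Sum>k\<le>Suc n. (-1)^k * of_nat (Suc n choose k) / of_nat (m + k + 1) :: 'a)
      = (\<Sum>k\<le>n. (-1)^k * of_nat (n choose k)
                     * (1 / of_nat (m + k + 1) - 1 / of_nat (Suc m + k + 1)))"
    using alternating_binomial_sum_Suc[of n "\<lambda>k. 1 / of_nat (m + k + 1) :: 'a"] by simp
  also have "\<dots> = (\<Sum>k\<le>n. (-1)^k * of_nat (n choose k) / of_nat (m + k + 1))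
                 - (\<Sum>k\<le>n. (-1)^k * of_nat (n choose k) / of_nat (Suc m + k + 1))"
    by (simp only: right_diff_distrib sum_subtractf times_divide_eq_right mult_1_right)
  also have "\<dots> = fact m * fact n / fact (m + n + 1)
                 - fact (Suc m) * fact n / fact (Suc m + n + 1)"
    by (simp only: Suc.IH)
  also have "\<dots> = fact m * fact (Suc n) / fact (m + Suc n + 1)"
  proof -
    have "x * y / F - b * x * y / (a * F) = x * ((a - b) * y) / (a * F)"
      if "a \<noteq> 0" "F \<noteq> 0" for x y a b F :: 'a
      using that by (simp add: field_simps)
    moreover have "fact (Suc m + n + 1) = (of_nat (m + n + 2) :: 'a) * fact (m + n + 1)"
      "fact (m + Suc n + 1) = (of_nat (m + n + 2) :: 'a) * fact (m + n + 1)"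
      using fact_Suc[of "m + n + 1"] by simp_all
    moreover have "of_nat (m + n + 2) - of_nat (Suc m) = (of_nat (Suc n) :: 'a)"
      by (simp add: algebra_simps)
    ultimately show ?thesis
      by (simp only: fact_Suc[of m] fact_Suc[of n]) (simp del: of_nat_Suc of_nat_add)
  qed
  finally show ?case .
qed

lemma summable_norm_power_series_fact_bound:
  fixes c :: "nat \<Rightarrow> 'a::real_normed_field"
  assumes "\<And>k. norm (c k) \<le> 1 / fact k"
  shows "summable (\<lambda>k. norm (c k * y ^ k))"
proof (rule summable_comparison_test)
  show "summable (\<lambda>k. inverse (fact k) * norm y ^ k)"
    by (rule summable_exp)
  show "\<exists>N. \<forall>k\<ge>N. norm (norm (c k * y ^ k)) \<le> inverse (fact k) * norm y ^ k"
    using assms by (auto simp: norm_mult norm_power divide_inverse intro!: mult_right_mono)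
qed

lemma exp_sums_power_div_fact:
  fixes x :: "'a::{real_normed_field,banach}"
  shows "(\<lambda>k. x ^ k / fact k) sums exp x"
  using exp_converges[of x] by (simp add: scaleR_conv_of_real divide_inverse mult.commute)

definition H_coeff :: "nat \<Rightarrow> nat \<Rightarrow> complex" where
  "H_coeff m k = (-1) ^ (m + k) / (fact k * of_nat (m + k + 1))"

text \<open>Power series of \<open>(-1)^m \<integral>\<^sub>0\<^sup>1 t^m e^{-ut} dt\<close>.\<close>
definition H_series :: "nat \<Rightarrow> complex \<Rightarrow> complex" where
  "H_series m u = (\<Sum>k. H_coeff m k * u ^ k)"

definition pBell_coeff :: "nat \<Rightarrow> nat \<Rightarrow> complex" where
  "pBell_coeff p k = 1 / (of_nat ((k + p) choose p) * fact k)"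

definition pBell_series :: "nat \<Rightarrow> complex \<Rightarrow> complex" where
  "pBell_series p u = (\<Sum>k. pBell_coeff p k * u ^ k)"

lemma norm_H_coeff_le: "norm (H_coeff m k) \<le> 1 / fact k"
  unfolding H_coeff_def norm_divide norm_mult norm_power norm_of_nat
  by (simp add: divide_simps del: of_nat_add)

lemma norm_pBell_coeff_le: "norm (pBell_coeff p k) \<le> 1 / fact k"
proof -
  have "1 \<le> (k + p) choose p"
    by (simp add: Suc_le_eq)
  then show ?thesis
    unfolding pBell_coeff_def by (simp add: norm_divide norm_mult divide_simps)
qed

lemma summable_H_series: "summable (\<lambda>k. H_coeff m k * u ^ k)"
  using summable_norm_power_series_fact_bound[OF norm_H_coeff_le] by (rule summable_norm_cancel)

lemma summable_pBell_series: "summable (\<lambda>k. pBell_coeff p k * u ^ k)"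
  using summable_norm_power_series_fact_bound[OF norm_pBell_coeff_le] by (rule summable_norm_cancel)

lemma diffs_H_coeff: "diffs (H_coeff m) = H_coeff (Suc m)"
proof
  fix k
  show "diffs (H_coeff m) k = H_coeff (Suc m) k"
    unfolding diffs_def H_coeff_def fact_Suc[of k] by (simp add: field_simps del: of_nat_Suc)
qed

lemma H_series_has_field_derivative:
  "(H_series m has_field_derivative H_series (Suc m) u) (at u)"
  using termdiffs_strong_converges_everywhere[OF summable_H_series, of m u]
  unfolding diffs_H_coeff H_series_def[abs_def] .

lemma pBell_series_holomorphic: "pBell_series p holomorphic_on UNIV"
  using termdiffs_strong_converges_everywhere[OF summable_pBell_series]
  unfolding pBell_series_def[abs_def] holomorphic_on_def field_differentiable_def
  by (blast intro: has_field_derivative_at_within)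

lemma H_series_0: "u * H_series 0 u = 1 - exp (- u)"
proof -
  have "(\<lambda>k. (- u) ^ Suc k / fact (Suc k)) sums (exp (- u) - 1)"
    using exp_sums_power_div_fact[of "- u"] by (subst sums_Suc_iff) simp
  then have "(\<lambda>k. u * (H_coeff 0 k * u ^ k)) sums (1 - exp (- u))"
    using sums_minus by (force simp: H_coeff_def fact_Suc[of k] power_minus' field_simps)
  moreover have "(\<lambda>k. u * (H_coeff 0 k * u ^ k)) sums (u * H_series 0 u)"
    unfolding H_series_def by (intro sums_mult summable_sums summable_H_series)
  ultimately show ?thesis
    using sums_unique2 by blast
qed

lemma pBell_coeff_Suc: "pBell_coeff (Suc m) n = fact (Suc m) / fact (m + n + 1)"
proof -
  have "of_nat ((n + Suc m) choose Suc m)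
      = (fact (m + n + 1) / (fact (Suc m) * fact n) :: complex)"
    using binomial_fact[of "Suc m" "n + Suc m"] by (simp add: add.commute)
  then show ?thesis
    unfolding pBell_coeff_def by simp
qed

lemma H_coeff_convolution_exp:
  "(-1) ^ m * of_nat (Suc m) * (\<Sum>i\<le>n. H_coeff m i / fact (n - i)) = pBell_coeff (Suc m) n"
proof -
  have "(\<Sum>i\<le>n. H_coeff m i / fact (n - i))
      = (-1) ^ m / fact n * (\<Sum>i\<le>n. (-1) ^ i * of_nat (n choose i) / of_nat (m + i + 1))"
    unfolding sum_distrib_left
  proof (rule sum.cong)
    fix i assume "i \<in> {..n}"
    then have "of_nat (n choose i) = (fact n / (fact i * fact (n - i)) :: complex)"
      by (simp add: binomial_fact)
    then show "H_coeff m i / fact (n - i)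
        = (-1) ^ m / fact n * ((-1) ^ i * of_nat (n choose i) / of_nat (m + i + 1))"
      unfolding H_coeff_def by (simp add: power_add field_simps del: of_nat_add of_nat_Suc)
  qed simp
  also have "\<dots> = (-1) ^ m * fact m / fact (m + n + 1)"
    by (simp only: alternating_binomial_sum_beta) simp
  finally show ?thesis
    by (simp add: pBell_coeff_Suc fact_Suc[of m] del: of_nat_Suc)
qed

lemma exp_times_H_series:
  "exp u * ((-1) ^ m * of_nat (Suc m) * H_series m u) = pBell_series (Suc m) u"
proof -
  have "(\<lambda>n. \<Sum>i\<le>n. H_coeff m i * u ^ i * (u ^ (n - i) / fact (n - i)))
          sums (H_series m u * exp u)"
  proof -
    have "summable (\<lambda>n. norm (u ^ n / fact n))"
      using summable_norm_power_series_fact_bound[of "\<lambda>k. 1 / fact k" u]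
      by (simp add: norm_divide)
    from Cauchy_product_sums[OF summable_norm_power_series_fact_bound[OF norm_H_coeff_le] this]
    show ?thesis
      unfolding H_series_def sums_unique[OF exp_sums_power_div_fact] .
  qed
  then have "(\<lambda>n. (-1) ^ m * of_nat (Suc m)
                  * (\<Sum>i\<le>n. H_coeff m i * u ^ i * (u ^ (n - i) / fact (n - i))))
      sums ((-1) ^ m * of_nat (Suc m) * (H_series m u * exp u))"
    by (rule sums_mult)
  moreover have "(-1) ^ m * of_nat (Suc m)
                   * (\<Sum>i\<le>n. H_coeff m i * u ^ i * (u ^ (n - i) / fact (n - i)))
      = pBell_coeff (Suc m) n * u ^ n" for n
  proof -
    have "(\<Sum>i\<le>n. H_coeff m i * u ^ i * (u ^ (n - i) / fact (n - i)))
        = (\<Sum>i\<le>n. H_coeff m i / fact (n - i)) * u ^ n"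
      unfolding sum_distrib_right by (intro sum.cong) (auto simp: power_add[symmetric])
    then show ?thesis
      using H_coeff_convolution_exp[of m n] by (simp add: mult.assoc)
  qed
  ultimately have "(\<lambda>n. pBell_coeff (Suc m) n * u ^ n)
      sums ((-1) ^ m * of_nat (Suc m) * (H_series m u * exp u))"
    by simp
  then show ?thesis
    unfolding pBell_series_def by (simp add: sums_iff algebra_simps)
qed

lemma expD_eq_deriv_in_exp_minus_one:
  assumes "open S" "w \<in> S" "\<And>x. x \<in> S \<Longrightarrow> f x = g (exp x - 1)"
    and "(g has_field_derivative g') (at (exp w - 1))"
  shows "expD f w = g'"
proof -
  have "((\<lambda>x. exp x - 1) has_field_derivative exp w) (at w)"
    by (auto intro!: derivative_eq_intros)
  from DERIV_chain2[OF assms(4) this]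
  have "((\<lambda>x. g (exp x - 1)) has_field_derivative g' * exp w) (at w)" .
  then have "(f has_field_derivative g' * exp w) (at w)"
    by (rule has_field_derivative_transform_within_open[OF _ assms(1,2)]) (simp add: assms(3))
  then show ?thesis
    unfolding expD_def by (simp add: DERIV_imp_deriv mult.commute exp_minus_inverse)
qed

lemma expD_iterate_eq_H_series:
  assumes "exp w \<noteq> 1"
  shows "(expD ^^ m) (\<lambda>w. (1 - exp (1 - exp w)) / (exp w - 1)) w = H_series m (exp w - 1)"
  using assms
proof (induction m arbitrary: w)
  case 0
  then show ?case
    using H_series_0[of "exp w - 1"] by (simp add: field_simps)
next
  case (Suc m)
  have "open {w::complex. exp w \<noteq> 1}"
    by (auto intro!: open_Collect_neq continuous_intros)
  with Suc show ?case
    by (auto intro: expD_eq_deriv_in_exp_minus_one H_series_has_field_derivative)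
qed

lemma pBell_egf_eq_pBell_series: "pBell_egf p z = pBell_series p (exp z - 1)"
  unfolding pBell_egf_def pBell_series_def pBell_coeff_def by simp

lemma pBell_egf_holomorphic: "pBell_egf p holomorphic_on UNIV"
proof -
  have "(pBell_series p \<circ> (\<lambda>z. exp z - 1)) holomorphic_on UNIV"
    by (intro holomorphic_on_compose holomorphic_intros
              holomorphic_on_subset[OF pBell_series_holomorphic]) auto
  then show ?thesis
    by (simp add: o_def pBell_egf_eq_pBell_series[abs_def])
qed

lemma pBell_sums_pBell_egf: "(\<lambda>n. pBell n p * z ^ n / fact n) sums pBell_egf p z"
  using holomorphic_power_series[OF holomorphic_on_subset[OF pBell_egf_holomorphic],
                                 of 0 "norm z + 1" z]
  by (simp add: pBell_def)

theorem mainTheorem6: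
  fixes p :: nat and z :: complex
  assumes "p \<ge> 1" and "exp z \<noteq> 1"
  shows "(\<lambda>n. pBell n p * z ^ n / fact n) sums
           (exp (exp z - 1) * (-1) ^ (p - 1) * of_nat p *
            (expD ^^ (p - 1)) (\<lambda>w. (1 - exp (1 - exp w)) / (exp w - 1)) z)"
proof -
  obtain m where p: "p = Suc m"
    using assms(1) by (cases p) auto
  have "pBell_egf p z = exp (exp z - 1) * ((-1) ^ m * of_nat (Suc m) * H_series m (exp z - 1))"
    unfolding pBell_egf_eq_pBell_series p exp_times_H_series ..
  also have "\<dots> = exp (exp z - 1) * (-1) ^ (p - 1) * of_nat p *
            (expD ^^ (p - 1)) (\<lambda>w. (1 - exp (1 - exp w)) / (exp w - 1)) z"
    by (simp add: p expD_iterate_eq_H_series[OF assms(2)] mult.assoc)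
  finally show ?thesis
    using pBell_sums_pBell_egf[of p z] by simp
qed

end
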